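(* For every $n\ge5$ and every integer $t$ with $n-2\le t\le \frac{n^2}{8}+\frac{n}{4}-\frac{11}{8}$, there exists an $(n,t)$-blocker.
   Context: For a convex $n$-gon: an edge is a segment between two vertices; diagonals are edges that are not sides of the polygon. Two edges cross if they share an interior point. A triangulation is a maximal set of pairwise non-crossing diagonals. A blocker is a set $B$ of diagonals having a diagonal in common with every triangulation; it is saturated if for every $e\in B$, $B\setminus\{e\}$ is not a blocker. An $(n,t)$-blocker is a saturated blocker of size $t$ for a convex $n$-gon. *)

theory Defs
  imports Complex_Main
begin

text \<open>Convex n-gon with vertices 0, ..., n-1 in cyclic order.
  An edge is an unordered pair of distinct vertices, represented as (i,j) with i < j.\<close>

definition is_edge :: "nat \<Rightarrow> nat \<times> nat \<Rightarrow> bool" where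
  "is_edge n e \<longleftrightarrow> fst e < snd e \<and> snd e < n"

definition is_side :: "nat \<Rightarrow> nat \<times> nat \<Rightarrow> bool" where
  "is_side n e \<longleftrightarrow> is_edge n e \<and> (snd e = fst e + 1 \<or> (fst e = 0 \<and> snd e = n - 1))"

definition diagonals :: "nat \<Rightarrow> (nat \<times> nat) set" where
  "diagonals n = {e. is_edge n e \<and> \<not> is_side n e}"

text \<open>In a convex polygon two distinct edges share an interior point iff their
  endpoints strictly interleave.\<close>
definition crosses :: "nat \<times> nat \<Rightarrow> nat \<times> nat \<Rightarrow> bool" where
  "crosses e f \<longleftrightarrow>
     (fst e < fst f \<and> fst f < snd e \<and> snd e < snd f) \<or>
     (fst f < fst e \<and> fst e < snd f \<and> snd f < snd e)"

definition noncrossing :: "(nat \<times> nat) set \<Rightarrow> bool" where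
  "noncrossing S \<longleftrightarrow> (\<forall>e\<in>S. \<forall>f\<in>S. \<not> crosses e f)"

definition triangulation :: "nat \<Rightarrow> (nat \<times> nat) set \<Rightarrow> bool" where
  "triangulation n T \<longleftrightarrow> T \<subseteq> diagonals n \<and> noncrossing T \<and>
     (\<forall>S. T \<subset> S \<and> S \<subseteq> diagonals n \<longrightarrow> \<not> noncrossing S)"

definition blocker :: "nat \<Rightarrow> (nat \<times> nat) set \<Rightarrow> bool" where
  "blocker n B \<longleftrightarrow> B \<subseteq> diagonals n \<and> (\<forall>T. triangulation n T \<longrightarrow> B \<inter> T \<noteq> {})"

definition saturated_blocker :: "nat \<Rightarrow> (nat \<times> nat) set \<Rightarrow> bool" where
  "saturated_blocker n B \<longleftrightarrow> blocker n B \<and> (\<forall>e\<in>B. \<not> blocker n (B - {e}))"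

definition nt_blocker :: "nat \<Rightarrow> nat \<Rightarrow> (nat \<times> nat) set \<Rightarrow> bool" where
  "nt_blocker n t B \<longleftrightarrow> saturated_blocker n B \<and> finite B \<and> card B = t"

end

theory Submission
  imports Defs
begin

text \<open>Split the boundary of the polygon into four consecutive nonempty arcs \<open>A, B, C, D\<close> of
  sizes \<open>a, b, c, d\<close>. The diagonals joining \<open>A\<close> to \<open>C\<close> or \<open>B\<close> to \<open>D\<close> form a blocker: in any
  triangulation, a shortest edge from \<open>A\<close> to \<open>D\<close> has its apex in \<open>B\<close> or \<open>C\<close>, which yields such a
  diagonal. It is saturated: each member triangulates a quadrilateral whose edges cross every
  other member, so a triangulation containing these five edges avoids all other members.
  Its size is \<open>ac + bd\<close>, and every \<open>t\<close> in the stated range has this form.\<close>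

lemma crosses_iff:
  "crosses (a, b) (c, d) \<longleftrightarrow> a < c \<and> c < b \<and> b < d \<or> c < a \<and> a < d \<and> d < b"
  by (simp add: crosses_def)

lemma crosses_sym: "crosses e f \<longleftrightarrow> crosses f e"
  by (auto simp: crosses_def)

lemma not_crosses_self: "\<not> crosses e e"
  by (auto simp: crosses_def)

lemma side_not_crosses:
  assumes "is_side n e" "is_edge n f"
  shows "\<not> crosses e f"
  using assms by (auto simp: is_side_def is_edge_def crosses_def)

lemma crosses_diagonal_imp_diagonal:
  assumes "is_edge n e" "f \<in> diagonals n" "crosses e f"
  shows "e \<in> diagonals n"
  using assms by (auto simp: diagonals_def is_side_def is_edge_def crosses_def)

lemma finite_diagonals: "finite (diagonals n)"
  by (rule finite_subset[of _ "{..<n} \<times> {..<n}"]) (auto simp: diagonals_def is_edge_def)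

lemma triangulation_extends:
  assumes "N \<subseteq> diagonals n" "noncrossing N"
  obtains T where "triangulation n T" "N \<subseteq> T"
proof -
  let ?F = "{S. N \<subseteq> S \<and> S \<subseteq> diagonals n \<and> noncrossing S}"
  have fin: "finite ?F"
    by (rule finite_subset[of _ "Pow (diagonals n)"]) (auto simp: finite_diagonals)
  have "N \<in> ?F" using assms by auto
  then obtain T where T: "T \<in> ?F" "\<forall>S\<in>?F. T \<le> S \<longrightarrow> T = S"
    using finite_has_maximal[OF fin] by blast
  have "triangulation n T"
    unfolding triangulation_def
  proof (intro conjI allI impI notI)
    fix S assume S: "T \<subset> S \<and> S \<subseteq> diagonals n" "noncrossing S"
    then have "S \<in> ?F" using T(1) by auto
    with T(2) S(1) show False by auto
  qed (use T in auto)
  with T(1) show thesis using that by blast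
qed

lemma triangulation_crosses_nonmember:
  assumes "triangulation n T" "d \<in> diagonals n" "d \<notin> T"
  obtains f where "f \<in> T" "crosses d f"
proof -
  have "\<not> noncrossing (insert d T)"
    using assms by (auto simp: triangulation_def)
  moreover have "noncrossing T"
    using assms(1) by (simp add: triangulation_def)
  ultimately show thesis
    using that crosses_sym not_crosses_self unfolding noncrossing_def by blast
qed

lemma not_blocker_if_crossed:
  assumes "noncrossing S" "\<forall>g\<in>S. is_edge n g" "\<forall>f\<in>B. \<exists>g\<in>S. crosses f g"
  shows "\<not> blocker n B"
proof
  assume "blocker n B"
  obtain T where T: "triangulation n T" "S \<inter> diagonals n \<subseteq> T"
    using triangulation_extends[of "S \<inter> diagonals n" n] assms(1)
    by (auto simp: noncrossing_def)
  have "T \<subseteq> diagonals n" "noncrossing T"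
    using T(1) by (simp_all add: triangulation_def)
  obtain f where f: "f \<in> B" "f \<in> T"
    using \<open>blocker n B\<close> T(1) unfolding blocker_def by blast
  then obtain g where g: "g \<in> S" "crosses f g" using assms(3) by blast
  then have "g \<in> diagonals n"
    using crosses_diagonal_imp_diagonal assms(2) f(2) \<open>T \<subseteq> diagonals n\<close> crosses_sym by blast
  with g T(2) f(2) \<open>noncrossing T\<close> show False
    by (auto simp: noncrossing_def)
qed

definition tri_edges :: "nat \<Rightarrow> (nat \<times> nat) set \<Rightarrow> (nat \<times> nat) set" where
  "tri_edges n T = T \<union> Collect (is_side n)"

lemma tri_edges_not_crosses:
  assumes T: "triangulation n T" and "e \<in> tri_edges n T" "f \<in> T"
  shows "\<not> crosses e f"
proof (cases "e \<in> T")
  case True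
  with T \<open>f \<in> T\<close> show ?thesis by (simp add: triangulation_def noncrossing_def)
next
  case False
  with assms(2) have "is_side n e" by (simp add: tri_edges_def)
  moreover have "is_edge n f"
    using T \<open>f \<in> T\<close> by (auto simp: triangulation_def diagonals_def)
  ultimately show ?thesis by (rule side_not_crosses)
qed

lemma tri_edges_bound:
  assumes "triangulation n T" "(x, y) \<in> tri_edges n T"
  shows "y < n"
proof -
  have "T \<subseteq> diagonals n" using assms(1) by (simp add: triangulation_def)
  with assms(2) show ?thesis
    by (auto simp: tri_edges_def diagonals_def is_edge_def is_side_def)
qed

lemma diagonal_in_tri_edges_imp_mem:
  assumes "d \<in> diagonals n" "d \<in> tri_edges n T"
  shows "d \<in> T"
  using assms by (auto simp: tri_edges_def diagonals_def)

lemma triangulation_apex: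
  assumes T: "triangulation n T" and xy: "(x, y) \<in> tri_edges n T" "x + 1 < y"
  obtains w where "x < w" "w < y" "(x, w) \<in> tri_edges n T" "(w, y) \<in> tri_edges n T"
proof -
  have "y < n" using tri_edges_bound[OF T xy(1)] .
  let ?W = "{w. x < w \<and> w < y \<and> (x, w) \<in> tri_edges n T}"
  define w where "w = Max ?W"
  have "x + 1 \<in> ?W"
    using xy \<open>y < n\<close> by (auto simp: tri_edges_def is_side_def is_edge_def)
  moreover have "finite ?W" by (rule finite_subset[of _ "{..<y}"]) auto
  ultimately have w: "w \<in> ?W" and w_max: "\<And>v. v \<in> ?W \<Longrightarrow> v \<le> w"
    unfolding w_def using Max_in Max_ge by blast+
  have "(w, y) \<in> tri_edges n T"
  proof (rule ccontr)
    assume wy: "(w, y) \<notin> tri_edges n T"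
    then have "(w, y) \<in> diagonals n"
      using w \<open>y < n\<close> by (auto simp: tri_edges_def diagonals_def is_side_def is_edge_def)
    moreover have "(w, y) \<notin> T" using wy by (simp add: tri_edges_def)
    ultimately obtain g h where gh: "(g, h) \<in> T" "crosses (w, y) (g, h)"
      using triangulation_crosses_nonmember[OF T] by (metis surj_pair)
    \<comment> \<open>An edge of \<open>T\<close> crossing \<open>(w, y)\<close> would cross \<open>(x, y)\<close> or \<open>(x, w)\<close>, or leave \<open>x\<close> beyond \<open>w\<close>.\<close>
    have "\<not> crosses (x, y) (g, h)" "\<not> crosses (x, w) (g, h)"
      using tri_edges_not_crosses[OF T] xy(1) w gh(1) by auto
    moreover have "g = x \<Longrightarrow> h \<in> ?W"
      using gh w by (auto simp: tri_edges_def crosses_iff)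
    ultimately show False
      using gh(2) w w_max[of h] unfolding crosses_iff by fastforce
  qed
  with w show thesis by (intro that) auto
qed

definition opposite_arc_diagonals :: "nat \<Rightarrow> nat \<Rightarrow> nat \<Rightarrow> nat \<Rightarrow> (nat \<times> nat) set" where
  "opposite_arc_diagonals n p k q = {..<p} \<times> {k..<q} \<union> {p..<k} \<times> {q..<n}"

lemma opposite_arc_diagonals_subset:
  assumes "0 < p" "p < k" "k < q" "q < n"
  shows "opposite_arc_diagonals n p k q \<subseteq> diagonals n"
  using assms
  by (auto simp: opposite_arc_diagonals_def diagonals_def is_edge_def is_side_def)

lemma card_opposite_arc_diagonals:
  assumes "p < k" "k < q"
  shows "card (opposite_arc_diagonals n p k q) = p * (q - k) + (k - p) * (n - q)"
proof -
  have "{..<p} \<times> {k..<q} \<inter> {p..<k} \<times> {q..<n} = {}" by auto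
  then show ?thesis
    by (simp add: opposite_arc_diagonals_def card_Un_disjoint card_cartesian_product)
qed

lemma blocker_opposite_arc_diagonals:
  assumes "0 < p" "p < k" "k < q" "q < n"
  shows "blocker n (opposite_arc_diagonals n p k q)"
  unfolding blocker_def
proof (intro conjI allI impI)
  let ?B = "opposite_arc_diagonals n p k q"
  show "?B \<subseteq> diagonals n" using assms by (rule opposite_arc_diagonals_subset)
  fix T assume T: "triangulation n T"
  show "?B \<inter> T \<noteq> {}"
  proof
    assume "?B \<inter> T = {}"
    then have avoid: "e \<notin> tri_edges n T" if "e \<in> ?B" for e
      using that diagonal_in_tri_edges_imp_mem opposite_arc_diagonals_subset[OF assms] by blast
    let ?Q = "\<lambda>(i, j). (i, j) \<in> tri_edges n T \<and> i < p \<and> q \<le> j"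
    have "?Q (0, n - 1)"
      using assms by (simp add: tri_edges_def is_side_def is_edge_def)
    then obtain i j where ij: "?Q (i, j)" and shortest: "\<And>i' j'. ?Q (i', j') \<Longrightarrow> j - i \<le> j' - i'"
      using ex_has_least_nat[of ?Q _ "\<lambda>(i, j). j - i"] by fastforce
    then have "i + 1 < j" "j < n" using assms tri_edges_bound[OF T] by auto
    with T ij obtain w where w: "i < w" "w < j" "(i, w) \<in> tri_edges n T" "(w, j) \<in> tri_edges n T"
      using triangulation_apex by blast
    consider "w < p" | "p \<le> w" "w < k" | "k \<le> w" "w < q" | "q \<le> w" by linarith
    then show False
    proof cases
      case 1
      then show ?thesis using shortest[of w j] ij w by auto
    next
      case 2
      then show ?thesis using avoid[of "(w, j)"] ij w \<open>j < n\<close> by (auto simp: opposite_arc_diagonals_def)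
    next
      case 3
      then show ?thesis using avoid[of "(i, w)"] ij w by (auto simp: opposite_arc_diagonals_def)
    next
      case 4
      then show ?thesis using shortest[of i w] ij w by auto
    qed
  qed
qed

definition quad_sides :: "nat \<Rightarrow> nat \<Rightarrow> nat \<Rightarrow> nat \<Rightarrow> (nat \<times> nat) set" where
  "quad_sides w x y z = {(w, x), (x, y), (y, z), (w, z)}"

lemma noncrossing_quad_diagonal:
  assumes "w < x" "x < y" "y < z"
  shows "noncrossing (insert (w, y) (quad_sides w x y z))"
    and "noncrossing (insert (x, z) (quad_sides w x y z))"
  using assms by (auto simp: noncrossing_def quad_sides_def crosses_iff)

lemma quad_sides_edges:
  assumes "w < x" "x < y" "y < z" "z < n"
  shows "\<forall>g \<in> insert (w, y) (quad_sides w x y z). is_edge n g"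
    and "\<forall>g \<in> insert (x, z) (quad_sides w x y z). is_edge n g"
  using assms by (auto simp: quad_sides_def is_edge_def)

lemma opposite_arc_diagonals_crossed_first:
  assumes "0 < p" "p < k" "k < q" "q < n" "i < p" "k \<le> j" "j < q"
    and "f \<in> opposite_arc_diagonals n p k q - {(i, j)}"
  shows "\<exists>g \<in> insert (i, j) (quad_sides i (k - 1) j (n - 1)). crosses f g"
proof -
  obtain a b where f: "f = (a, b)" by force
  consider "a < p" "k \<le> b" "b < q" | "p \<le> a" "a < k" "q \<le> b" "b < n"
    using assms(8) by (auto simp: f opposite_arc_diagonals_def)
  then show ?thesis
  proof cases
    case 1
    then show ?thesis using assms unfolding f
      by (cases a i rule: linorder_cases; cases b j rule: linorder_cases)
        (auto simp: quad_sides_def crosses_iff)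
  next
    case 2
    then show ?thesis using assms by (auto simp: f crosses_iff)
  qed
qed

lemma opposite_arc_diagonals_crossed_second:
  assumes "0 < p" "p < k" "k < q" "q < n" "p \<le> i" "i < k" "q \<le> j" "j < n"
    and "f \<in> opposite_arc_diagonals n p k q - {(i, j)}"
  shows "\<exists>g \<in> insert (i, j) (quad_sides 0 i k j). crosses f g"
proof -
  obtain a b where f: "f = (a, b)" by force
  consider "a < p" "k \<le> b" "b < q" | "p \<le> a" "a < k" "q \<le> b" "b < n"
    using assms(9) by (auto simp: f opposite_arc_diagonals_def)
  then show ?thesis
  proof cases
    case 1
    then show ?thesis using assms by (auto simp: f crosses_iff)
  next
    case 2
    then show ?thesis using assms unfolding f
      by (cases a i rule: linorder_cases; cases b j rule: linorder_cases)
        (auto simp: quad_sides_def crosses_iff)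
  qed
qed

lemma saturated_blocker_opposite_arc_diagonals:
  assumes "0 < p" "p < k" "k < q" "q < n"
  shows "saturated_blocker n (opposite_arc_diagonals n p k q)"
  unfolding saturated_blocker_def
proof (intro conjI ballI)
  show "blocker n (opposite_arc_diagonals n p k q)"
    using assms by (rule blocker_opposite_arc_diagonals)
  fix e assume "e \<in> opposite_arc_diagonals n p k q"
  then obtain i j where e: "e = (i, j)"
    and "i < p \<and> k \<le> j \<and> j < q \<or> p \<le> i \<and> i < k \<and> q \<le> j \<and> j < n"
    by (auto simp: opposite_arc_diagonals_def)
  then consider "i < p" "k \<le> j" "j < q" | "p \<le> i" "i < k" "q \<le> j" "j < n" by blast
  then show "\<not> blocker n (opposite_arc_diagonals n p k q - {e})"
  proof cases
    case 1
    then have "i < k - 1" "k - 1 < j" "j < n - 1" using assms by auto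
    show ?thesis unfolding e
    proof (rule not_blocker_if_crossed)
      show "noncrossing (insert (i, j) (quad_sides i (k - 1) j (n - 1)))"
        using noncrossing_quad_diagonal(1) \<open>i < k - 1\<close> \<open>k - 1 < j\<close> \<open>j < n - 1\<close> .
      show "\<forall>g \<in> insert (i, j) (quad_sides i (k - 1) j (n - 1)). is_edge n g"
        using quad_sides_edges(1) \<open>i < k - 1\<close> \<open>k - 1 < j\<close> \<open>j < n - 1\<close> by simp
      show "\<forall>f \<in> opposite_arc_diagonals n p k q - {(i, j)}.
          \<exists>g \<in> insert (i, j) (quad_sides i (k - 1) j (n - 1)). crosses f g"
        using opposite_arc_diagonals_crossed_first assms 1 by blast
    qed
  next
    case 2
    then have "0 < i" "i < k" "k < j" using assms by auto
    show ?thesis unfolding e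
    proof (rule not_blocker_if_crossed)
      show "noncrossing (insert (i, j) (quad_sides 0 i k j))"
        using noncrossing_quad_diagonal(2) \<open>0 < i\<close> \<open>i < k\<close> \<open>k < j\<close> .
      show "\<forall>g \<in> insert (i, j) (quad_sides 0 i k j). is_edge n g"
        using quad_sides_edges(2) \<open>0 < i\<close> \<open>i < k\<close> \<open>k < j\<close> \<open>j < n\<close> by simp
      show "\<forall>f \<in> opposite_arc_diagonals n p k q - {(i, j)}.
          \<exists>g \<in> insert (i, j) (quad_sides 0 i k j). crosses f g"
        using opposite_arc_diagonals_crossed_second assms 2 by blast
    qed
  qed
qed

lemma quarter_product_bound:
  fixes n t :: nat
  assumes "8 * t + 11 \<le> n\<^sup>2 + 2 * n"
  shows "t + 1 \<le> (n + 3) div 4 * (n + 1 - 2 * ((n + 3) div 4))"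
proof -
  define r where "r = n div 4"
  consider "n = 4 * r" | "n = 4 * r + 1" | "n = 4 * r + 2" | "n = 4 * r + 3"
    using mod_less_divisor[of 4 n] div_mult_mod_eq[of n 4] unfolding r_def by arith
  then show ?thesis
    using assms by cases (simp_all add: power2_eq_square algebra_simps)
qed

lemma four_part_representation:
  fixes n t :: nat
  assumes "5 \<le> n" "n - 2 \<le> t" "8 * t + 11 \<le> n\<^sup>2 + 2 * n"
  obtains a b c d where "0 < a" "0 < b" "0 < c" "0 < d" "a + b + c + d = n" "t = a * c + b * d"
proof -
  \<comment> \<open>With \<open>a = y\<close>, \<open>d = y - 1\<close> and \<open>b + c = m = n + 1 - 2y\<close> the size is \<open>(y - 1)m + c\<close>, which
    ranges over \<open>((y - 1)m, ym)\<close>; take \<open>y\<close> least with \<open>t < ym\<close>.\<close>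
  let ?P = "\<lambda>y. 2 \<le> y \<and> t + 1 \<le> y * (n + 1 - 2 * y)"
  define y where "y = (LEAST y. ?P y)"
  have "?P ((n + 3) div 4)"
    using assms quarter_product_bound by auto
  then have Py: "?P y" and "y \<le> (n + 3) div 4"
    unfolding y_def by (rule LeastI, rule Least_le)
  then have "2 * y + 1 \<le> n" using assms(1) by linarith
  define m where "m = n + 1 - 2 * y"
  have nm: "n + 1 = 2 * y + m" using \<open>2 * y + 1 \<le> n\<close> by (simp add: m_def)
  obtain d where y: "y = d + 1" "0 < d" using Py by (cases y) auto
  have "d * m < t"
  proof (cases "d = 1")
    case True
    then show ?thesis using assms(2) nm y by simp
  next
    case False
    have "\<not> ?P d"
      using not_less_Least[of d ?P] unfolding y_def[symmetric] y by simp
    moreover have "n + 1 - 2 * d = m + 2" using nm y by simp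
    ultimately have "d * m + 2 * d < t + 1"
      using False y by (simp add: distrib_left)
    then show ?thesis using y(2) by linarith
  qed
  then obtain c where t: "t = d * m + c" and "0 < c"
    using less_imp_add_positive by (metis add.commute)
  have "t + 1 \<le> y * m" using Py unfolding m_def by blast
  then have "t + 1 \<le> d * m + m" by (simp add: y)
  then have "c < m" using t by linarith
  then obtain b where m: "m = c + b" "0 < b"
    using less_imp_add_positive by blast
  show thesis
  proof
    show "y + b + c + d = n" using nm m y by simp
    show "t = y * c + b * d" by (simp add: t m y algebra_simps)
  qed (use y \<open>0 < b\<close> \<open>0 < c\<close> in auto)
qed

theorem lemma3p3:
  fixes n t :: nat
  assumes "n \<ge> 5"
    and "n - 2 \<le> t"
    and "real t \<le> real n ^ 2 / 8 + real n / 4 - 11 / 8"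
  shows "\<exists>B. nt_blocker n t B"
proof -
  have "real (8 * t + 11) \<le> real (n\<^sup>2 + 2 * n)" using assms(3) by simp
  then have "8 * t + 11 \<le> n\<^sup>2 + 2 * n" by (simp only: of_nat_le_iff)
  with assms(1,2) obtain a b c d where abcd: "0 < a" "0 < b" "0 < c" "0 < d"
    and n: "a + b + c + d = n" and t: "t = a * c + b * d"
    by (rule four_part_representation)
  let ?B = "opposite_arc_diagonals n a (a + b) (a + b + c)"
  have "saturated_blocker n ?B"
    using abcd n by (intro saturated_blocker_opposite_arc_diagonals) auto
  moreover have "card ?B = t"
    using abcd n t by (simp add: card_opposite_arc_diagonals)
  moreover have "finite ?B" by (simp add: opposite_arc_diagonals_def)
  ultimately show ?thesis unfolding nt_blocker_def by blast
qed

end
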